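(* Let $A$ be a non-zero evolution algebra with natural basis $B=\{e_i:i\in\Lambda\}$, and let $\Lambda_m=\{i\in\Lambda: i\text{ is a modular index}\}$. Then $$\mathrm{Rad}(A)=\mathrm{lin}\{e_i:i\in\Lambda\setminus\Lambda_m\}.$$ In particular, $A$ is a radical algebra if and only if $\Lambda_m=\emptyset$, and $A$ is semisimple if and only if $\Lambda_m=\Lambda$.
   Context: An evolution algebra is an algebra $A$ over $\mathbb{K}\in\{\mathbb{R},\mathbb{C}\}$ with a basis $\{e_i:i\in\Lambda\}$ (natural basis) with $e_ie_j=0$ for $i\neq j$; write $e_j^2=\sum_k\omega_{kj}e_k$. An index $i_0$ is a modular index if $\omega_{i_0i_0}\neq0$ and $\omega_{i_0j}=0$ for all $j\neq i_0$. An ideal $M$ is modular if some $u\in A$ satisfies $a-au\in M$ for all $a\in A$. The Jacobson radical $\mathrm{Rad}(A)$ is the intersection of all maximal modular ideals (proper modular ideals maximal among proper modular ideals) of $A$, with $\mathrm{Rad}(A)=A$ if there are none. $A$ is semisimple if $\mathrm{Rad}(A)=\{0\}$ and a radical algebra if $\mathrm{Rad}(A)=A$. *)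

theory Defs
  imports Main "HOL-Library.Function_Algebras"
begin

text \<open>
Coordinate model of an evolution algebra with natural basis indexed by the type 'i
(the index set Lambda) over a field 'k.  An element of A is a finitely supported
coordinate function x :: 'i \<Rightarrow> 'k, representing the sum over i of x i e_i.
The structure constants are w k j, i.e. e_j^2 = sum over k of w k j e_k; each
column w (-) j must be finitely supported.
\<close>

definition evo_alg :: "('i \<Rightarrow> 'k::field) set" where
  "evo_alg = {x. finite {i. x i \<noteq> 0}}"

definition evo_basis :: "'i \<Rightarrow> ('i \<Rightarrow> 'k::field)" where
  "evo_basis i = (\<lambda>k. if k = i then 1 else 0)"

definition evo_mult :: "('i \<Rightarrow> 'i \<Rightarrow> 'k::field) \<Rightarrow> ('i \<Rightarrow> 'k) \<Rightarrow> ('i \<Rightarrow> 'k) \<Rightarrow> ('i \<Rightarrow> 'k)" where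
  "evo_mult w x y = (\<lambda>k. \<Sum>j\<in>{j. x j \<noteq> 0 \<and> y j \<noteq> 0}. x j * y j * w k j)"

definition modular_index :: "('i \<Rightarrow> 'i \<Rightarrow> 'k::field) \<Rightarrow> 'i \<Rightarrow> bool" where
  "modular_index w i0 \<longleftrightarrow> w i0 i0 \<noteq> 0 \<and> (\<forall>j. j \<noteq> i0 \<longrightarrow> w i0 j = 0)"

definition evo_ideal :: "('i \<Rightarrow> 'i \<Rightarrow> 'k::field) \<Rightarrow> ('i \<Rightarrow> 'k) set \<Rightarrow> bool" where
  "evo_ideal w M \<longleftrightarrow> M \<subseteq> evo_alg \<and> 0 \<in> M
     \<and> (\<forall>x\<in>M. \<forall>y\<in>M. x + y \<in> M)
     \<and> (\<forall>c. \<forall>x\<in>M. (\<lambda>k. c * x k) \<in> M)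
     \<and> (\<forall>a\<in>evo_alg. \<forall>m\<in>M. evo_mult w a m \<in> M \<and> evo_mult w m a \<in> M)"

definition modular_ideal :: "('i \<Rightarrow> 'i \<Rightarrow> 'k::field) \<Rightarrow> ('i \<Rightarrow> 'k) set \<Rightarrow> bool" where
  "modular_ideal w M \<longleftrightarrow> evo_ideal w M \<and>
     (\<exists>u\<in>evo_alg. \<forall>a\<in>evo_alg. a - evo_mult w a u \<in> M)"

definition maximal_modular_ideal :: "('i \<Rightarrow> 'i \<Rightarrow> 'k::field) \<Rightarrow> ('i \<Rightarrow> 'k) set \<Rightarrow> bool" where
  "maximal_modular_ideal w M \<longleftrightarrow> modular_ideal w M \<and> M \<noteq> evo_alg \<and>
     (\<forall>N. modular_ideal w N \<and> N \<noteq> evo_alg \<and> M \<subseteq> N \<longrightarrow> N = M)"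

definition jacobson_rad :: "('i \<Rightarrow> 'i \<Rightarrow> 'k::field) \<Rightarrow> ('i \<Rightarrow> 'k) set" where
  "jacobson_rad w = (if {M. maximal_modular_ideal w M} = {} then evo_alg
                     else \<Inter>{M. maximal_modular_ideal w M})"

definition lin_basis :: "'i set \<Rightarrow> ('i \<Rightarrow> 'k::field) set" where
  "lin_basis S = {x. \<exists>F c. finite F \<and> F \<subseteq> S \<and>
                        x = (\<lambda>k. \<Sum>i\<in>F. c i * evo_basis i k)}"

end

theory Submission
  imports Defs
begin

text \<open>
The maximal modular ideals of an evolution algebra are exactly the coordinate hyperplanes
\<open>{x. x i = 0}\<close> with \<open>i\<close> a modular index, so the radical is the set of vectors vanishing at
every modular index.  A hyperplane is an ideal precisely when \<open>e\<^sub>i\<close> occurs in no square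
\<open>e\<^sub>j\<^sup>2\<close> with \<open>j \<noteq> i\<close>, and \<open>e\<^sub>i / \<omega>\<^sub>i\<^sub>i\<close> is then a modular unit.  Conversely, if \<open>M\<close> is
maximal modular with unit \<open>u\<close> and \<open>e\<^sub>i \<notin> M\<close>, then \<open>e\<^sub>i \<equiv> e\<^sub>i u = u\<^sub>i e\<^sub>i\<^sup>2\<close> modulo \<open>M\<close>; this
forces \<open>M\<close> into the hyperplane at \<open>i\<close> and makes \<open>M + \<bbbK> e\<^sub>i\<close> an ideal, which by maximality is
all of \<open>A\<close>, so \<open>M\<close> is that hyperplane.
\<close>

lemma evo_alg_zero: "0 \<in> evo_alg"
  by (simp add: evo_alg_def)

lemma evo_alg_add: "x \<in> evo_alg \<Longrightarrow> y \<in> evo_alg \<Longrightarrow> x + y \<in> evo_alg"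
  unfolding evo_alg_def
  by (auto intro: finite_subset[of _ "{i. x i \<noteq> 0} \<union> {i. y i \<noteq> 0}"])

lemma evo_alg_diff: "x \<in> evo_alg \<Longrightarrow> y \<in> evo_alg \<Longrightarrow> x - y \<in> evo_alg"
  unfolding evo_alg_def
  by (auto intro: finite_subset[of _ "{i. x i \<noteq> 0} \<union> {i. y i \<noteq> 0}"])

lemma evo_alg_scale: "x \<in> evo_alg \<Longrightarrow> (\<lambda>k. c * x k) \<in> evo_alg"
  unfolding evo_alg_def by (auto intro: finite_subset[of _ "{i. x i \<noteq> 0}"])

lemma evo_basis_in_evo_alg: "evo_basis i \<in> evo_alg"
  by (simp add: evo_alg_def evo_basis_def)

lemma evo_basis_same [simp]: "evo_basis i i = 1"
  and evo_basis_other [simp]: "k \<noteq> i \<Longrightarrow> evo_basis i k = 0"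
  by (simp_all add: evo_basis_def)

lemma sum_scale_evo_basis:
  "finite F \<Longrightarrow> (\<lambda>k. \<Sum>i\<in>F. c i * evo_basis i k) = (\<lambda>k. if k \<in> F then c k else 0)"
  by (simp add: evo_basis_def if_distrib cong: if_cong)

lemma lin_basis_eq:
  fixes S :: "'i set"
  shows "lin_basis S = {x :: 'i \<Rightarrow> 'k::field. x \<in> evo_alg \<and> (\<forall>i. x i \<noteq> 0 \<longrightarrow> i \<in> S)}"
proof (intro equalityI subsetI)
  fix x :: "'i \<Rightarrow> 'k" assume "x \<in> lin_basis S"
  then obtain F c where F: "finite F" "F \<subseteq> S" and x: "x = (\<lambda>k. if k \<in> F then c k else 0)"
    unfolding lin_basis_def using sum_scale_evo_basis by blast
  have "{k. x k \<noteq> 0} \<subseteq> F" by (auto simp: x)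
  with F show "x \<in> {x. x \<in> evo_alg \<and> (\<forall>i. x i \<noteq> 0 \<longrightarrow> i \<in> S)}"
    by (auto simp: evo_alg_def x intro: finite_subset)
next
  fix x :: "'i \<Rightarrow> 'k" assume x: "x \<in> {x. x \<in> evo_alg \<and> (\<forall>i. x i \<noteq> 0 \<longrightarrow> i \<in> S)}"
  let ?F = "{i. x i \<noteq> 0}"
  have "finite ?F" using x by (simp add: evo_alg_def)
  moreover have "x = (\<lambda>k. \<Sum>i\<in>?F. x i * evo_basis i k)"
    using \<open>finite ?F\<close> by (subst sum_scale_evo_basis) auto
  ultimately show "x \<in> lin_basis S" using x unfolding lin_basis_def by blast
qed

lemma lin_basis_UNIV: "lin_basis UNIV = evo_alg"
  by (simp add: lin_basis_eq)

lemma evo_mult_eq_sum: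
  assumes "finite F" "{j. x j \<noteq> 0 \<and> y j \<noteq> 0} \<subseteq> F"
  shows "evo_mult w x y k = (\<Sum>j\<in>F. x j * y j * w k j)"
  unfolding evo_mult_def by (rule sum.mono_neutral_left) (use assms in auto)

lemma evo_mult_commute: "evo_mult w x y = evo_mult w y x"
  unfolding evo_mult_def by (simp add: conj_commute mult.commute)

lemma evo_mult_add_left:
  assumes "x \<in> evo_alg" "y \<in> evo_alg"
  shows "evo_mult w (x + y) z = evo_mult w x z + evo_mult w y z"
proof
  fix k
  let ?F = "{j. x j \<noteq> 0} \<union> {j. y j \<noteq> 0}"
  have F: "finite ?F" using assms by (simp add: evo_alg_def)
  have "evo_mult w (x + y) z k = (\<Sum>j\<in>?F. (x + y) j * z j * w k j)"
    by (rule evo_mult_eq_sum[OF F]) auto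
  also have "\<dots> = (\<Sum>j\<in>?F. x j * z j * w k j) + (\<Sum>j\<in>?F. y j * z j * w k j)"
    by (simp add: sum.distrib algebra_simps)
  also have "\<dots> = evo_mult w x z k + evo_mult w y z k"
    by (subst (1 2) evo_mult_eq_sum[OF F]) auto
  finally show "evo_mult w (x + y) z k = (evo_mult w x z + evo_mult w y z) k"
    by simp
qed

lemma evo_mult_scale_left:
  assumes "x \<in> evo_alg"
  shows "evo_mult w (\<lambda>k. c * x k) z = (\<lambda>k. c * evo_mult w x z k)"
proof
  fix k
  let ?F = "{j. x j \<noteq> 0}"
  have F: "finite ?F" using assms by (simp add: evo_alg_def)
  have "evo_mult w (\<lambda>k. c * x k) z k = (\<Sum>j\<in>?F. c * x j * z j * w k j)"
    by (rule evo_mult_eq_sum[OF F]) auto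
  also have "\<dots> = c * (\<Sum>j\<in>?F. x j * z j * w k j)"
    by (simp add: sum_distrib_left mult.assoc)
  also have "\<dots> = c * evo_mult w x z k"
    by (subst evo_mult_eq_sum[OF F]) auto
  finally show "evo_mult w (\<lambda>k. c * x k) z k = c * evo_mult w x z k" .
qed

lemma evo_mult_basis_left: "evo_mult w (evo_basis i) y = (\<lambda>k. y i * w k i)"
proof
  fix k
  have "evo_mult w (evo_basis i) y k = (\<Sum>j\<in>{i}. evo_basis i j * y j * w k j)"
    by (rule evo_mult_eq_sum) (auto simp: evo_basis_def split: if_splits)
  then show "evo_mult w (evo_basis i) y k = y i * w k i" by simp
qed

lemma evo_mult_in_evo_alg:
  assumes "\<forall>j. finite {k. w k j \<noteq> 0}" and "x \<in> evo_alg"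
  shows "evo_mult w x y \<in> evo_alg"
proof -
  let ?S = "\<Union>j\<in>{j. x j \<noteq> 0}. {k. w k j \<noteq> 0}"
  have "evo_mult w x y k = 0" if "k \<notin> ?S" for k
    using that unfolding evo_mult_def by (intro sum.neutral) auto
  then have "{k. evo_mult w x y k \<noteq> 0} \<subseteq> ?S" by blast
  moreover have "finite ?S" using assms by (simp add: evo_alg_def)
  ultimately show ?thesis unfolding evo_alg_def using finite_subset by blast
qed

context
  fixes w :: "'i \<Rightarrow> 'i \<Rightarrow> 'k::field" and M :: "('i \<Rightarrow> 'k) set"
  assumes ideal: "evo_ideal w M"
begin

lemma evo_ideal_subset: "M \<subseteq> evo_alg"
  and evo_ideal_zero: "0 \<in> M"
  and evo_ideal_add: "x \<in> M \<Longrightarrow> y \<in> M \<Longrightarrow> x + y \<in> M"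
  and evo_ideal_scale: "x \<in> M \<Longrightarrow> (\<lambda>k. c * x k) \<in> M"
  and evo_ideal_mult_left: "a \<in> evo_alg \<Longrightarrow> x \<in> M \<Longrightarrow> evo_mult w a x \<in> M"
  and evo_ideal_mult_right: "a \<in> evo_alg \<Longrightarrow> x \<in> M \<Longrightarrow> evo_mult w x a \<in> M"
  using ideal by (simp_all add: evo_ideal_def)

lemma evo_ideal_lin_basis:
  assumes "\<forall>i\<in>S. evo_basis i \<in> M"
  shows "lin_basis S \<subseteq> M"
proof
  fix x :: "'i \<Rightarrow> 'k" assume "x \<in> lin_basis S"
  then obtain F c where "finite F" "F \<subseteq> S" and x: "x = (\<lambda>k. \<Sum>i\<in>F. c i * evo_basis i k)"
    unfolding lin_basis_def by blast
  from this(1,2) show "x \<in> M" unfolding x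
  proof (induction F rule: finite_induct)
    case empty
    then show ?case using evo_ideal_zero by (simp add: zero_fun_def)
  next
    case (insert j F)
    then have "(\<lambda>k. c j * evo_basis j k) + (\<lambda>k. \<Sum>i\<in>F. c i * evo_basis i k) \<in> M"
      using assms by (intro evo_ideal_add evo_ideal_scale) auto
    then show ?case using insert by (simp add: plus_fun_def)
  qed
qed

lemma evo_ideal_proper_imp_basis_notin:
  assumes "M \<noteq> evo_alg"
  obtains i where "evo_basis i \<notin> M"
  using assms evo_ideal_lin_basis[of UNIV] evo_ideal_subset by (auto simp: lin_basis_UNIV)

end

subsection \<open>Coordinate hyperplanes\<close>

definition coord_hyperplane :: "'i \<Rightarrow> ('i \<Rightarrow> 'k::field) set" where
  "coord_hyperplane i = {x \<in> evo_alg. x i = 0}"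

lemma evo_basis_notin_coord_hyperplane: "evo_basis i \<notin> coord_hyperplane i"
  by (simp add: coord_hyperplane_def)

lemma coord_hyperplane_ne_evo_alg: "coord_hyperplane i \<noteq> evo_alg"
  by (metis evo_basis_in_evo_alg evo_basis_notin_coord_hyperplane)

lemma evo_ideal_coord_hyperplane_iff:
  fixes w :: "'i \<Rightarrow> 'i \<Rightarrow> 'k::field"
  assumes fin: "\<forall>j. finite {k. w k j \<noteq> 0}"
  shows "evo_ideal w (coord_hyperplane i) \<longleftrightarrow> (\<forall>j. j \<noteq> i \<longrightarrow> w i j = 0)"
proof
  assume ideal: "evo_ideal w (coord_hyperplane i)"
  have "w i j = 0" if "j \<noteq> i" for j
  proof -
    have "evo_basis j \<in> coord_hyperplane i"
      using that by (simp add: coord_hyperplane_def evo_basis_in_evo_alg)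
    then have "evo_mult w (evo_basis j) (evo_basis j) \<in> coord_hyperplane i"
      by (rule evo_ideal_mult_left[OF ideal evo_basis_in_evo_alg])
    then show ?thesis by (simp add: coord_hyperplane_def evo_mult_basis_left)
  qed
  then show "\<forall>j. j \<noteq> i \<longrightarrow> w i j = 0" by blast
next
  assume row: "\<forall>j. j \<noteq> i \<longrightarrow> w i j = 0"
  have mult: "evo_mult w a x \<in> coord_hyperplane i" if "a \<in> evo_alg" "x \<in> coord_hyperplane i" for a x
  proof -
    have "evo_mult w a x i = 0"
      using that row unfolding evo_mult_def coord_hyperplane_def by (intro sum.neutral) auto
    then show ?thesis using evo_mult_in_evo_alg[OF fin \<open>a \<in> evo_alg\<close>]
      by (simp add: coord_hyperplane_def)
  qed
  show "evo_ideal w (coord_hyperplane i)"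
    unfolding evo_ideal_def
  proof (intro conjI ballI allI)
    fix a x :: "'i \<Rightarrow> 'k" assume "a \<in> evo_alg" "x \<in> coord_hyperplane i"
    then show "evo_mult w a x \<in> coord_hyperplane i" "evo_mult w x a \<in> coord_hyperplane i"
      using mult by (simp_all add: evo_mult_commute[of w x])
  qed (auto simp: coord_hyperplane_def evo_alg_zero evo_alg_add evo_alg_scale)
qed

text \<open>Only the subspace structure of \<open>N\<close> matters: the hyperplanes have codimension one.\<close>

lemma evo_ideal_supset_coord_hyperplane:
  assumes "evo_ideal w N" "coord_hyperplane i \<subseteq> N" "N \<noteq> evo_alg"
  shows "N = coord_hyperplane i"
proof (rule ccontr)
  assume "N \<noteq> coord_hyperplane i"
  with assms(2) obtain x where x: "x \<in> N" "x i \<noteq> 0"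
    using evo_ideal_subset[OF assms(1)] by (auto simp: coord_hyperplane_def)
  have "a \<in> N" if a: "a \<in> evo_alg" for a
  proof -
    let ?y = "\<lambda>k. (a i / x i) * x k"
    have y: "?y \<in> N" using x(1) by (rule evo_ideal_scale[OF assms(1)])
    then have "a - ?y \<in> coord_hyperplane i"
      using a x(2) evo_ideal_subset[OF assms(1)]
      by (auto simp: coord_hyperplane_def intro: evo_alg_diff)
    then have "(a - ?y) + ?y \<in> N" using assms(2) y by (blast intro: evo_ideal_add[OF assms(1)])
    then show "a \<in> N" by simp
  qed
  then show False using assms(3) evo_ideal_subset[OF assms(1)] by blast
qed

lemma maximal_modular_ideal_coord_hyperplane:
  fixes w :: "'i \<Rightarrow> 'i \<Rightarrow> 'k::field"
  assumes fin: "\<forall>j. finite {k. w k j \<noteq> 0}" and mi: "modular_index w i"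
  shows "maximal_modular_ideal w (coord_hyperplane i)"
proof -
  have ideal: "evo_ideal w (coord_hyperplane i)"
    using mi by (simp add: evo_ideal_coord_hyperplane_iff[OF fin] modular_index_def)
  define u :: "'i \<Rightarrow> 'k" where "u = (\<lambda>k. (1 / w i i) * evo_basis i k)"
  have u: "u \<in> evo_alg" unfolding u_def by (rule evo_alg_scale[OF evo_basis_in_evo_alg])
  have "a - evo_mult w a u \<in> coord_hyperplane i" if a: "a \<in> evo_alg" for a
  proof -
    have "evo_mult w a u = (\<lambda>k. (1 / w i i) * (a i * w k i))"
      unfolding evo_mult_commute[of w a] u_def evo_mult_scale_left[OF evo_basis_in_evo_alg]
      by (simp add: evo_mult_basis_left)
    moreover have "a - evo_mult w a u \<in> evo_alg"
      using a evo_mult_in_evo_alg[OF fin a] by (rule evo_alg_diff)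
    ultimately show ?thesis using mi by (simp add: coord_hyperplane_def modular_index_def)
  qed
  then have "modular_ideal w (coord_hyperplane i)"
    unfolding modular_ideal_def using ideal u by blast
  moreover have "N = coord_hyperplane i"
    if "modular_ideal w N" "N \<noteq> evo_alg" "coord_hyperplane i \<subseteq> N" for N
    using that by (intro evo_ideal_supset_coord_hyperplane[of w]) (simp_all add: modular_ideal_def)
  ultimately show ?thesis
    by (auto simp: maximal_modular_ideal_def coord_hyperplane_ne_evo_alg)
qed

subsection \<open>Every maximal modular ideal is a coordinate hyperplane\<close>

definition plus_basis_line :: "('i \<Rightarrow> 'k::field) set \<Rightarrow> 'i \<Rightarrow> ('i \<Rightarrow> 'k) set" where
  "plus_basis_line M i = {m + (\<lambda>k. c * evo_basis i k) | m c. m \<in> M}"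

lemma subset_plus_basis_line: "0 \<in> M \<Longrightarrow> M \<subseteq> plus_basis_line M i"
  unfolding plus_basis_line_def by (force intro: exI[of _ 0])

lemma evo_basis_in_plus_basis_line: "0 \<in> M \<Longrightarrow> evo_basis i \<in> plus_basis_line M i"
  unfolding plus_basis_line_def by (force intro: exI[of _ 0] exI[of _ 1])

text \<open>\<open>M + \<bbbK> e\<^sub>i\<close> is an ideal as soon as it contains \<open>e\<^sub>i\<^sup>2\<close>, since every product with \<open>e\<^sub>i\<close> is a multiple of \<open>e\<^sub>i\<^sup>2\<close>.\<close>

lemma evo_ideal_plus_basis_line:
  fixes w :: "'i \<Rightarrow> 'i \<Rightarrow> 'k::field"
  assumes ideal: "evo_ideal w M" and sq: "(\<lambda>k. w k i) \<in> plus_basis_line M i"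
  shows "evo_ideal w (plus_basis_line M i)"
proof -
  let ?e = "evo_basis i"
  note M = evo_ideal_subset[OF ideal] evo_ideal_zero[OF ideal] evo_ideal_add[OF ideal]
    evo_ideal_scale[OF ideal] evo_ideal_mult_right[OF ideal]
  have add: "x + y \<in> plus_basis_line M i" if "x \<in> plus_basis_line M i" "y \<in> plus_basis_line M i" for x y
  proof -
    from that obtain m c m' c' where "m \<in> M" "m' \<in> M"
      "x = m + (\<lambda>k. c * ?e k)" "y = m' + (\<lambda>k. c' * ?e k)"
      unfolding plus_basis_line_def by blast
    moreover from this have "x + y = (m + m') + (\<lambda>k. (c + c') * ?e k)"
      by (simp add: fun_eq_iff algebra_simps)
    ultimately show ?thesis unfolding plus_basis_line_def using M(3) by blast
  qed
  have scale: "(\<lambda>k. d * x k) \<in> plus_basis_line M i" if "x \<in> plus_basis_line M i" for d x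
  proof -
    from that obtain m c where "m \<in> M" "x = m + (\<lambda>k. c * ?e k)"
      unfolding plus_basis_line_def by blast
    moreover from this have "(\<lambda>k. d * x k) = (\<lambda>k. d * m k) + (\<lambda>k. (d * c) * ?e k)"
      by (simp add: fun_eq_iff algebra_simps)
    ultimately show ?thesis unfolding plus_basis_line_def using M(4) by blast
  qed
  have mult: "evo_mult w x a \<in> plus_basis_line M i"
    if a: "a \<in> evo_alg" and "x \<in> plus_basis_line M i" for a x
  proof -
    from that obtain m c where m: "m \<in> M" and x: "x = m + (\<lambda>k. c * ?e k)"
      unfolding plus_basis_line_def by blast
    have "evo_mult w x a = evo_mult w m a + (\<lambda>k. (c * a i) * w k i)"
      using m M(1) unfolding x
      by (auto simp: evo_mult_add_left evo_alg_scale evo_basis_in_evo_alg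
          evo_mult_scale_left evo_mult_basis_left mult.assoc)
    moreover have "evo_mult w m a \<in> plus_basis_line M i"
      using M(5)[OF a m] subset_plus_basis_line[OF M(2)] by blast
    ultimately show ?thesis using add scale[OF sq] by simp
  qed
  have "plus_basis_line M i \<subseteq> evo_alg"
  proof
    fix x assume "x \<in> plus_basis_line M i"
    then obtain m c where "m \<in> M" and x: "x = m + (\<lambda>k. c * ?e k)"
      unfolding plus_basis_line_def by blast
    then have "m \<in> evo_alg" using M(1) by blast
    then show "x \<in> evo_alg" unfolding x by (intro evo_alg_add evo_alg_scale evo_basis_in_evo_alg)
  qed
  moreover have "0 \<in> plus_basis_line M i"
    using M(2) subset_plus_basis_line[OF M(2)] by blast
  ultimately show ?thesis
    unfolding evo_ideal_def
  proof (intro conjI ballI allI)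
    fix a x :: "'i \<Rightarrow> 'k" assume "a \<in> evo_alg" "x \<in> plus_basis_line M i"
    then show "evo_mult w a x \<in> plus_basis_line M i" "evo_mult w x a \<in> plus_basis_line M i"
      using mult by (simp_all add: evo_mult_commute[of w a])
  qed (use add scale in auto)
qed

text \<open>The hypotheses below describe \<open>e\<^sub>i \<equiv> c e\<^sub>i\<^sup>2 \<noteq> 0\<close> modulo \<open>M\<close>, which holds with \<open>c = u\<^sub>i\<close> for a modular unit \<open>u\<close>.\<close>

context
  fixes w :: "'i \<Rightarrow> 'i \<Rightarrow> 'k::field" and M :: "('i \<Rightarrow> 'k) set" and i :: 'i and c :: 'k
  assumes ideal: "evo_ideal w M"
    and basis_equiv: "evo_basis i - (\<lambda>k. c * w k i) \<in> M"
    and basis_notin: "evo_basis i \<notin> M"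
begin

lemma square_basis_notin_evo_ideal: "(\<lambda>k. w k i) \<notin> M"
proof
  assume "(\<lambda>k. w k i) \<in> M"
  then have "(evo_basis i - (\<lambda>k. c * w k i)) + (\<lambda>k. c * w k i) \<in> M"
    using basis_equiv by (intro evo_ideal_add[OF ideal] evo_ideal_scale[OF ideal])
  then show False using basis_notin by simp
qed

lemma evo_ideal_subset_coord_hyperplane: "M \<subseteq> coord_hyperplane i"
proof
  fix x assume x: "x \<in> M"
  have "evo_mult w (evo_basis i) x \<in> M"
    using x by (rule evo_ideal_mult_left[OF ideal evo_basis_in_evo_alg])
  then have "(\<lambda>k. x i * w k i) \<in> M" by (simp add: evo_mult_basis_left)
  from evo_ideal_scale[OF ideal this, of "1 / x i"]
  have "x i = 0" using square_basis_notin_evo_ideal by (cases "x i = 0") simp_all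
  then show "x \<in> coord_hyperplane i"
    using x evo_ideal_subset[OF ideal] by (auto simp: coord_hyperplane_def)
qed

lemma square_basis_in_plus_basis_line: "(\<lambda>k. w k i) \<in> plus_basis_line M i"
proof -
  have "c \<noteq> 0" using basis_equiv basis_notin by (auto simp flip: zero_fun_def)
  then have "(\<lambda>k. w k i) = (\<lambda>k. (- 1 / c) * (evo_basis i - (\<lambda>k. c * w k i)) k)
      + (\<lambda>k. (1 / c) * evo_basis i k)"
    by (simp add: fun_eq_iff field_simps)
  then show ?thesis
    unfolding plus_basis_line_def using evo_ideal_scale[OF ideal basis_equiv] by blast
qed

end

lemma maximal_modular_ideal_imp_coord_hyperplane:
  fixes w :: "'i \<Rightarrow> 'i \<Rightarrow> 'k::field"
  assumes fin: "\<forall>j. finite {k. w k j \<noteq> 0}" and max: "maximal_modular_ideal w M"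
  obtains i where "modular_index w i" and "M = coord_hyperplane i"
proof -
  have proper: "M \<noteq> evo_alg" and modular: "modular_ideal w M"
    and maximal: "\<And>N. modular_ideal w N \<Longrightarrow> N \<noteq> evo_alg \<Longrightarrow> M \<subseteq> N \<Longrightarrow> N = M"
    using max unfolding maximal_modular_ideal_def by blast+
  then obtain u where u: "u \<in> evo_alg" and unit: "\<And>a. a \<in> evo_alg \<Longrightarrow> a - evo_mult w a u \<in> M"
    and ideal: "evo_ideal w M"
    unfolding modular_ideal_def by blast
  obtain i where notin: "evo_basis i \<notin> M"
    using evo_ideal_proper_imp_basis_notin[OF ideal proper] .
  have equiv: "evo_basis i - (\<lambda>k. u i * w k i) \<in> M"
    using unit[OF evo_basis_in_evo_alg] by (simp add: evo_mult_basis_left)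
  note M_subset = evo_ideal_subset_coord_hyperplane[OF ideal equiv notin]
  let ?N = "plus_basis_line M i"
  have "evo_ideal w ?N"
    using evo_ideal_plus_basis_line[OF ideal square_basis_in_plus_basis_line[OF ideal equiv notin]] .
  moreover have "M \<subseteq> ?N" using subset_plus_basis_line[OF evo_ideal_zero[OF ideal]] .
  ultimately have "modular_ideal w ?N"
    unfolding modular_ideal_def using u unit by blast
  moreover have "?N \<noteq> M"
    using evo_basis_in_plus_basis_line[OF evo_ideal_zero[OF ideal]] notin by blast
  ultimately have N_full: "?N = evo_alg" using maximal \<open>M \<subseteq> ?N\<close> by blast
  have "coord_hyperplane i \<subseteq> M"
  proof
    fix x :: "'i \<Rightarrow> 'k" assume x: "x \<in> coord_hyperplane i"
    then have "x \<in> ?N" using N_full by (simp add: coord_hyperplane_def)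
    then obtain m c where m: "m \<in> M" and x_eq: "x = m + (\<lambda>k. c * evo_basis i k)"
      unfolding plus_basis_line_def by blast
    have "c = 0" using x m M_subset by (auto simp: x_eq coord_hyperplane_def)
    then show "x \<in> M" using m by (simp add: x_eq flip: zero_fun_def)
  qed
  with M_subset have M_eq: "M = coord_hyperplane i" by blast
  have "w i i \<noteq> 0" using equiv by (auto simp: M_eq coord_hyperplane_def)
  moreover have "\<forall>j. j \<noteq> i \<longrightarrow> w i j = 0"
    using ideal by (simp add: M_eq evo_ideal_coord_hyperplane_iff[OF fin])
  ultimately show thesis using that M_eq by (simp add: modular_index_def)
qed

lemma maximal_modular_ideals_eq:
  fixes w :: "'i \<Rightarrow> 'i \<Rightarrow> 'k::field"
  assumes "\<forall>j. finite {k. w k j \<noteq> 0}"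
  shows "{M. maximal_modular_ideal w M} = coord_hyperplane ` {i. modular_index w i}"
  using maximal_modular_ideal_imp_coord_hyperplane[OF assms]
    maximal_modular_ideal_coord_hyperplane[OF assms]
  by blast

lemma INT_coord_hyperplane: "I \<noteq> {} \<Longrightarrow> (\<Inter>i\<in>I. coord_hyperplane i) = lin_basis (- I)"
  by (auto simp: coord_hyperplane_def lin_basis_eq)

lemma jacobson_rad_eq_lin_basis:
  fixes w :: "'i \<Rightarrow> 'i \<Rightarrow> 'k::field"
  assumes "\<forall>j. finite {k. w k j \<noteq> 0}"
  shows "jacobson_rad w = lin_basis {i. \<not> modular_index w i}"
  using INT_coord_hyperplane[of "{i. modular_index w i}"]
  by (auto simp: jacobson_rad_def maximal_modular_ideals_eq[OF assms] lin_basis_UNIV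
      Collect_neg_eq)

lemma evo_basis_in_lin_basis_iff: "evo_basis i \<in> lin_basis S \<longleftrightarrow> i \<in> S"
proof -
  have "\<forall>j. evo_basis i j \<noteq> 0 \<longrightarrow> j = i" by (simp add: evo_basis_def)
  then show ?thesis by (auto simp: lin_basis_eq evo_basis_in_evo_alg)
qed

lemma lin_basis_eq_evo_alg_iff: "lin_basis S = evo_alg \<longleftrightarrow> S = UNIV"
  by (metis UNIV_I evo_basis_in_evo_alg evo_basis_in_lin_basis_iff lin_basis_UNIV subsetI subset_antisym)

lemma lin_basis_eq_zero_iff:
  fixes S :: "'i set"
  shows "lin_basis S = {0 :: 'i \<Rightarrow> 'k::field} \<longleftrightarrow> S = {}"
proof
  assume zero: "lin_basis S = {0 :: 'i \<Rightarrow> 'k}"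
  have "i \<notin> S" for i
  proof
    assume "i \<in> S"
    then have "(evo_basis i :: 'i \<Rightarrow> 'k) \<in> lin_basis S" by (simp add: evo_basis_in_lin_basis_iff)
    then have "evo_basis i = (0 :: 'i \<Rightarrow> 'k)" using zero by simp
    then have "evo_basis i i = (0 :: 'k)" by simp
    then show False by simp
  qed
  then show "S = {}" by blast
qed (auto simp: lin_basis_eq evo_alg_zero)

theorem corollary3p13:
  fixes w :: "'i \<Rightarrow> 'i \<Rightarrow> 'k::field"
  assumes "\<forall>j. finite {k. w k j \<noteq> 0}"
  shows "jacobson_rad w = lin_basis {i. \<not> modular_index w i}
         \<and> (jacobson_rad w = evo_alg \<longleftrightarrow> {i. modular_index w i} = {})
         \<and> (jacobson_rad w = {0} \<longleftrightarrow> {i. modular_index w i} = UNIV)"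
  by (auto simp: jacobson_rad_eq_lin_basis[OF assms] lin_basis_eq_evo_alg_iff lin_basis_eq_zero_iff)

end
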